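(* Let $n\ge1$, let $a_1,\dots,a_n\ge2$ be integers, $d_0=1$, $d_i=a_1\cdots a_i$, and $I'_n=\{\kappa\in\{1,\dots,d_n\}\mid a_n\nmid\kappa\}$. Let $K_n:=\{\mathbf{k}=(k_1,\dots,k_n)\in\mathbb{Z}^n\mid 0\le k_i\le a_i-1\ (i=1,\dots,n-1),\ 0\le k_n\le a_n-2\}$. Then the map $$\psi:K_n\to I'_n,\qquad \psi(k_1,\dots,k_n):=\sum_{l=1}^n(-1)^{l-1}\frac{d_n}{d_l}(k_l+1)$$ is a well-defined bijection between sets of $d_n-d_{n-1}$ elements, and it satisfies $\omega^{(n)}_{\psi(\mathbf{k}),i}=\omega^{(n)}_{\mathbf{k},i}$ for all $\mathbf{k}\in K_n$ and $i=1,\dots,n$. In particular $\psi(0,\dots,0)=\sum_{l=1}^n(-1)^{l-1}\frac{d_n}{d_l}$.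
   Context: Here, for $\mathbf{k}\in\mathbb{Z}^n$, $(\omega^{(n)}_{\mathbf{k},1},\dots,\omega^{(n)}_{\mathbf{k},n}):=(k_1+1,\dots,k_n+1)\mathbb{E}^{-T}$ with $\mathbb{E}=(a_i\delta_{i,j}+\delta_{i+1,j})_{i,j=1}^n$ and $\mathbb{E}^{-T}=(\mathbb{E}^{-1})^T$; and for $\kappa\in I'_n$, $\omega^{(n)}_{\kappa,i}:=(-1)^{i-1}\frac{d_{i-1}}{d_n}\kappa-\lfloor(-1)^{i-1}\frac{d_{i-1}}{d_n}\kappa\rfloor$. *)

theory Defs
  imports Complex_Main
begin

text \<open>Parameters a_1,...,a_n are given as a function a :: nat => int, only the
values on 1..n matter. Vectors in Z^n are functions nat => int supported on 1..n.\<close>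

definition dd :: "(nat \<Rightarrow> int) \<Rightarrow> nat \<Rightarrow> int" where
  "dd a i = (\<Prod>j\<in>{1..i}. a j)"

definition Iprime :: "(nat \<Rightarrow> int) \<Rightarrow> nat \<Rightarrow> int set" where
  "Iprime a n = {\<kappa>. 1 \<le> \<kappa> \<and> \<kappa> \<le> dd a n \<and> \<not> (a n dvd \<kappa>)}"

definition Kset :: "(nat \<Rightarrow> int) \<Rightarrow> nat \<Rightarrow> (nat \<Rightarrow> int) set" where
  "Kset a n = {k. (\<forall>i\<in>{1..<n}. 0 \<le> k i \<and> k i \<le> a i - 1) \<and> 0 \<le> k n \<and> k n \<le> a n - 2
                 \<and> (\<forall>i. i \<notin> {1..n} \<longrightarrow> k i = 0)}"

definition psi :: "(nat \<Rightarrow> int) \<Rightarrow> nat \<Rightarrow> (nat \<Rightarrow> int) \<Rightarrow> int" where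
  "psi a n k = (\<Sum>l=1..n. (-1)^(l-1) * (dd a n div dd a l) * (k l + 1))"

definition Emat :: "(nat \<Rightarrow> int) \<Rightarrow> nat \<Rightarrow> nat \<Rightarrow> real" where
  "Emat a i j = (if i = j then real_of_int (a i) else 0) + (if j = i + 1 then 1 else 0)"

definition Einv :: "(nat \<Rightarrow> int) \<Rightarrow> nat \<Rightarrow> nat \<Rightarrow> nat \<Rightarrow> real" where
  "Einv a n = (THE B. (\<forall>i\<in>{1..n}. \<forall>j\<in>{1..n}.
                   (\<Sum>l=1..n. Emat a i l * B l j) = (if i = j then 1 else 0)) \<and>
                (\<forall>i j. i \<notin> {1..n} \<or> j \<notin> {1..n} \<longrightarrow> B i j = 0))"

text \<open>omega_{k,j} = j-th entry of the row vector (k_1+1,...,k_n+1) E^{-T},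
  where (E^{-T})_{i,j} = (E^{-1})_{j,i}.\<close>
definition omega_vec :: "(nat \<Rightarrow> int) \<Rightarrow> nat \<Rightarrow> (nat \<Rightarrow> int) \<Rightarrow> nat \<Rightarrow> real" where
  "omega_vec a n k j = (\<Sum>i=1..n. real_of_int (k i + 1) * Einv a n j i)"

definition omega_kappa :: "(nat \<Rightarrow> int) \<Rightarrow> nat \<Rightarrow> int \<Rightarrow> nat \<Rightarrow> real" where
  "omega_kappa a n \<kappa> i =
     (let x = (-1)^(i-1) * real_of_int (dd a (i-1)) / real_of_int (dd a n) * real_of_int \<kappa>
      in x - real_of_int \<lfloor>x\<rfloor>)"

end

(*
  E is upper bidiagonal, and its inverse has entries (-1)^(c-r) d_(r-1) / d_c for r <= c. Hence
  omega_(k,j) = S_j := sum_(i>=j) (-1)^(i-j) (k_i + 1) d_(j-1) / d_i, which satisfies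
  a_j S_j = (k_j + 1) - S_(j+1) with S_(n+1) = 0; the digit bounds defining K_n then give
  0 < S_j < 1 by downward induction on j.
  On the other side x_j := (-1)^(j-1) d_(j-1) psi(k) / d_n satisfies x_1 = S_1 and
  x_(j+1) = -a_j x_j, so x_j - S_j is an integer and omega_(psi(k),j) = frac x_j = S_j.
  Consequently psi(k) = d_n S_1 lies strictly between 0 and d_n, a_n does not divide psi(k)
  (else x_n would be an integer while S_n > 0), and k is recovered from the fractional parts
  via k_j + 1 = a_j S_j + S_(j+1). An injection between sets of equal size
  (a_n - 1) d_(n-1) = d_n - d_(n-1) is a bijection.
*)
theory Submission
  imports Defs "HOL-Library.FuncSet"
begin

lemma dd_0 [simp]: "dd a 0 = 1"
  by (simp add: dd_def)

lemma dd_Suc [simp]: "dd a (Suc i) = dd a i * a (Suc i)"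
  unfolding dd_def by (simp add: prod.nat_ivl_Suc' mult.commute)

lemma dd_eq_dd_pred_mult: "1 \<le> i \<Longrightarrow> dd a i = dd a (i - 1) * a i"
  using dd_Suc[of a "i - 1"] by simp

lemma dd_nonzero: "\<forall>i\<in>{1..n}. a i \<noteq> 0 \<Longrightarrow> m \<le> n \<Longrightarrow> dd a m \<noteq> 0"
  unfolding dd_def by auto

lemma dd_pos: "\<forall>i\<in>{1..n}. 0 < a i \<Longrightarrow> m \<le> n \<Longrightarrow> 0 < dd a m"
  unfolding dd_def by (auto intro: prod_pos)

lemma dd_dvd_dd: "l \<le> m \<Longrightarrow> dd a l dvd dd a m"
  unfolding dd_def by (rule prod_dvd_prod_subset) auto

definition is_Einv :: "(nat \<Rightarrow> int) \<Rightarrow> nat \<Rightarrow> (nat \<Rightarrow> nat \<Rightarrow> real) \<Rightarrow> bool" where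
  "is_Einv a n B \<longleftrightarrow>
     (\<forall>i\<in>{1..n}. \<forall>j\<in>{1..n}. (\<Sum>l=1..n. Emat a i l * B l j) = (if i = j then 1 else 0)) \<and>
     (\<forall>i j. i \<notin> {1..n} \<or> j \<notin> {1..n} \<longrightarrow> B i j = 0)"

lemma Einv_eq_The: "Einv a n = (THE B. is_Einv a n B)"
  by (simp add: Einv_def is_Einv_def)

lemma Emat_row_sum:
  assumes "i \<in> {1..n}"
  shows "(\<Sum>l=1..n. Emat a i l * x l) = a i * x i + (if i < n then x (Suc i) else 0)"
proof -
  have "(\<Sum>l=1..n. Emat a i l * x l)
      = (\<Sum>l=1..n. if l = i then a i * x l else 0) + (\<Sum>l=1..n. if l = Suc i then x l else 0)"
    unfolding sum.distrib[symmetric] by (rule sum.cong) (auto simp: Emat_def)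
  then show ?thesis
    using assms by (simp add: sum.delta')
qed

definition Einv_closed :: "(nat \<Rightarrow> int) \<Rightarrow> nat \<Rightarrow> nat \<Rightarrow> nat \<Rightarrow> real" where
  "Einv_closed a n r c =
     (if 1 \<le> r \<and> r \<le> c \<and> c \<le> n
      then (-1)^(c - r) * real_of_int (dd a (r - 1)) / real_of_int (dd a c) else 0)"

lemma is_Einv_Einv_closed:
  assumes nz: "\<forall>i\<in>{1..n}. a i \<noteq> 0"
  shows "is_Einv a n (Einv_closed a n)"
  unfolding is_Einv_def
proof (intro conjI ballI allI impI)
  fix i j assume i: "i \<in> {1..n}" and j: "j \<in> {1..n}"
  have d_i: "dd a i = dd a (i - 1) * a i"
    using i by (simp add: dd_eq_dd_pred_mult)
  have "a i \<noteq> 0" "dd a (i - 1) \<noteq> 0"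
    using i nz by (auto intro!: dd_nonzero[OF nz])
  have "a i * Einv_closed a n i j + (if i < n then Einv_closed a n (Suc i) j else 0)
      = (if i = j then 1 else 0)"
  proof (cases rule: linorder_cases[of i j])
    case less
    then have "j - i = Suc (j - Suc i)"
      by simp
    with less i j show ?thesis
      by (simp add: Einv_closed_def d_i)
  next
    case equal
    show ?thesis
      unfolding equal[symmetric]
      using i \<open>a i \<noteq> 0\<close> \<open>dd a (i - 1) \<noteq> 0\<close> by (simp add: Einv_closed_def d_i)
  qed (auto simp: Einv_closed_def)
  then show "(\<Sum>l=1..n. Emat a i l * Einv_closed a n l j) = (if i = j then 1 else 0)"
    using Emat_row_sum[OF i] by simp
qed (auto simp: Einv_closed_def)

lemma is_Einv_unique:
  assumes nz: "\<forall>i\<in>{1..n}. a i \<noteq> 0" and B: "is_Einv a n B" and C: "is_Einv a n C"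
  shows "B = C"
proof (intro ext)
  fix r c
  show "B r c = C r c"
  proof (cases "r \<in> {1..n} \<and> c \<in> {1..n}")
    case False
    with B C show ?thesis
      by (auto simp: is_Einv_def)
  next
    case True
    then have c: "c \<in> {1..n}" and r: "1 \<le> r" "r \<le> n"
      by auto
    have row: "a i * B i c + (if i < n then B (Suc i) c else 0)
             = a i * C i c + (if i < n then C (Suc i) c else 0)" if "i \<in> {1..n}" for i
    proof -
      have "(\<Sum>l=1..n. Emat a i l * B l c) = (\<Sum>l=1..n. Emat a i l * C l c)"
        using B C c that by (simp add: is_Einv_def)
      then show ?thesis
        by (simp only: Emat_row_sum[OF that, of a "\<lambda>l. B l c"] Emat_row_sum[OF that, of a "\<lambda>l. C l c"])
    qed
    \<comment> \<open>back substitution: E is upper bidiagonal with nonzero diagonal\<close>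
    from \<open>r \<le> n\<close> show ?thesis
    proof (induction rule: inc_induct)
      case base
      show ?case
        using row[of n] nz r by auto
    next
      case (step m)
      then show ?case
        using row[of m] nz r by auto
    qed
  qed
qed

lemma Einv_eq_Einv_closed:
  assumes "\<forall>i\<in>{1..n}. a i \<noteq> 0"
  shows "Einv a n = Einv_closed a n"
  unfolding Einv_eq_The
  using is_Einv_Einv_closed[OF assms] is_Einv_unique[OF assms] by (blast intro: the_equality)

definition omega_tail :: "(nat \<Rightarrow> int) \<Rightarrow> nat \<Rightarrow> (nat \<Rightarrow> int) \<Rightarrow> nat \<Rightarrow> real" where
  "omega_tail a n k j =
     (\<Sum>i=j..n. (-1)^(i - j) * real_of_int (k i + 1) * real_of_int (dd a (j - 1)) / real_of_int (dd a i))"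

lemma omega_tail_Suc_n [simp]: "omega_tail a n k (Suc n) = 0"
  by (simp add: omega_tail_def)

lemma omega_vec_eq_omega_tail:
  assumes "\<forall>i\<in>{1..n}. a i \<noteq> 0" and j: "j \<in> {1..n}"
  shows "omega_vec a n k j = omega_tail a n k j"
  unfolding omega_vec_def omega_tail_def Einv_eq_Einv_closed[OF assms(1)]
proof (rule sum.mono_neutral_cong_right)
  show "\<forall>i\<in>{1..n} - {j..n}. (k i + 1) * Einv_closed a n j i = 0"
    by (auto simp: Einv_closed_def)
qed (use j in \<open>auto simp: Einv_closed_def\<close>)

lemma omega_tail_rec:
  assumes nz: "\<forall>i\<in>{1..n}. a i \<noteq> 0" and j: "1 \<le> j" "j \<le> n"
  shows "a j * omega_tail a n k j = (k j + 1) - omega_tail a n k (Suc j)"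
proof -
  have "a j * omega_tail a n k j
      = (\<Sum>i=j..n. (-1)^(i - j) * real_of_int (k i + 1) * real_of_int (dd a j) / real_of_int (dd a i))"
    unfolding omega_tail_def sum_distrib_left
    by (rule sum.cong) (use j in \<open>simp_all add: dd_eq_dd_pred_mult[of j]\<close>)
  also have "\<dots> = (k j + 1)
      + (\<Sum>i=Suc j..n. (-1)^(i - j) * real_of_int (k i + 1) * real_of_int (dd a j) / real_of_int (dd a i))"
    using j dd_nonzero[OF nz, of j] by (simp add: sum.atLeast_Suc_atMost)
  also have "(\<Sum>i=Suc j..n. (-1)^(i - j) * real_of_int (k i + 1) * real_of_int (dd a j) / real_of_int (dd a i))
      = - omega_tail a n k (Suc j)"
    unfolding omega_tail_def sum_negf[symmetric]
  proof (rule sum.cong)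
    fix i assume "i \<in> {Suc j..n}"
    then have "i - j = Suc (i - Suc j)"
      by auto
    then show "(-1)^(i - j) * real_of_int (k i + 1) * real_of_int (dd a j) / real_of_int (dd a i)
        = - ((-1)^(i - Suc j) * real_of_int (k i + 1) * real_of_int (dd a (Suc j - 1)) / real_of_int (dd a i))"
      by simp
  qed simp
  finally show ?thesis
    by simp
qed

lemma mem_KsetD:
  assumes "k \<in> Kset a n"
  shows "i \<in> {1..<n} \<Longrightarrow> 0 \<le> k i \<and> k i < a i"
    and "0 \<le> k n \<and> k n \<le> a n - 2"
    and "i \<notin> {1..n} \<Longrightarrow> k i = 0"
  using assms by (auto simp: Kset_def)

lemma mem_Kset_imp_pos:
  assumes "k \<in> Kset a n"
  shows "\<forall>i\<in>{1..n}. 0 < a i"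
proof
  fix i assume "i \<in> {1..n}"
  then consider "i \<in> {1..<n}" | "i = n"
    by fastforce
  then show "0 < a i"
    by cases (use mem_KsetD[OF assms] in fastforce)+
qed

lemma omega_tail_bounds:
  assumes k: "k \<in> Kset a n" and j: "1 \<le> j" "j \<le> n"
  shows "0 < omega_tail a n k j \<and> omega_tail a n k j < 1"
proof -
  have pos: "\<forall>i\<in>{1..n}. 0 < a i"
    using mem_Kset_imp_pos[OF k] .
  then have nz: "\<forall>i\<in>{1..n}. a i \<noteq> 0"
    by auto
  have unit: "0 < y \<and> y < 1" if "0 < x * y" "x * y < x" "0 < x" for x y :: real
    using that by (metis mult.right_neutral mult_less_cancel_left_pos zero_less_mult_pos)
  from \<open>j \<le> n\<close> show ?thesis
  proof (induction rule: inc_induct)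
    case base
    have "a n * omega_tail a n k n = k n + 1"
      using omega_tail_rec[OF nz, of n k] j by simp
    moreover have "0 \<le> real_of_int (k n)" "real_of_int (k n) \<le> a n - 2"
      using mem_KsetD(2)[OF k] by simp_all
    moreover have "0 < real_of_int (a n)"
      using pos j by simp
    ultimately show ?case
      using unit[of "a n" "omega_tail a n k n"] by linarith
  next
    case (step m)
    have "a m * omega_tail a n k m = k m + 1 - omega_tail a n k (Suc m)"
      using omega_tail_rec[OF nz, of m k] j step.hyps by simp
    moreover have "0 \<le> real_of_int (k m)" "real_of_int (k m) \<le> a m - 1"
      using mem_KsetD(1)[OF k, of m] j step.hyps by simp_all
    moreover have "0 < real_of_int (a m)"
      using pos j step.hyps by simp
    ultimately show ?case
      using unit[of "a m" "omega_tail a n k m"] step.IH by linarith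
  qed
qed

definition omega_arg :: "(nat \<Rightarrow> int) \<Rightarrow> nat \<Rightarrow> int \<Rightarrow> nat \<Rightarrow> real" where
  "omega_arg a n \<kappa> i =
     (-1)^(i - 1) * real_of_int (dd a (i - 1)) / real_of_int (dd a n) * real_of_int \<kappa>"

lemma omega_kappa_eq_frac: "omega_kappa a n \<kappa> i = frac (omega_arg a n \<kappa> i)"
  by (simp add: omega_kappa_def omega_arg_def frac_def Let_def)

lemma omega_arg_Suc: "1 \<le> j \<Longrightarrow> omega_arg a n \<kappa> (Suc j) = - a j * omega_arg a n \<kappa> j"
  by (cases j) (simp_all add: omega_arg_def)

lemma real_of_int_psi:
  "real_of_int (psi a n k) =
     (\<Sum>l=1..n. (-1)^(l - 1) * (real_of_int (dd a n) / real_of_int (dd a l)) * real_of_int (k l + 1))"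
  unfolding psi_def of_int_sum
  by (rule sum.cong) (auto simp: real_of_int_div dd_dvd_dd)

lemma omega_arg_1_psi:
  assumes nz: "\<forall>i\<in>{1..n}. a i \<noteq> 0"
  shows "omega_arg a n (psi a n k) 1 = omega_tail a n k 1"
  unfolding omega_arg_def real_of_int_psi omega_tail_def sum_distrib_left
proof (rule sum.cong)
  fix l assume "l \<in> {1..n}"
  with dd_nonzero[OF nz] have "dd a l \<noteq> 0" "dd a n \<noteq> 0"
    by auto
  then show "(-1)^(1 - 1) * real_of_int (dd a (1 - 1)) / real_of_int (dd a n)
      * ((-1)^(l - 1) * (real_of_int (dd a n) / real_of_int (dd a l)) * real_of_int (k l + 1))
    = (-1)^(l - 1) * real_of_int (k l + 1) * real_of_int (dd a (1 - 1)) / real_of_int (dd a l)"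
    by (simp add: field_simps)
qed simp

lemma omega_arg_psi_minus_omega_tail_Ints:
  assumes nz: "\<forall>i\<in>{1..n}. a i \<noteq> 0" and j: "1 \<le> j" "j \<le> n"
  shows "omega_arg a n (psi a n k) j - omega_tail a n k j \<in> \<int>"
  using j(1)
proof (induction rule: dec_induct)
  case base
  show ?case
    using omega_arg_1_psi[OF nz, of k] by simp
next
  case (step m)
  have "m \<le> n"
    using step.hyps j by linarith
  have "omega_arg a n (psi a n k) (Suc m) - omega_tail a n k (Suc m)
      = - real_of_int (a m) * (omega_arg a n (psi a n k) m - omega_tail a n k m) - real_of_int (k m + 1)"
    using omega_arg_Suc[OF step.hyps(1)] omega_tail_rec[OF nz step.hyps(1) \<open>m \<le> n\<close>, of k]
    by (simp add: algebra_simps)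
  also have "\<dots> \<in> \<int>"
    by (rule Ints_diff[OF Ints_mult[OF Ints_minus[OF Ints_of_int] step.IH] Ints_of_int])
  finally show ?case .
qed

lemma omega_kappa_psi:
  assumes k: "k \<in> Kset a n" and j: "j \<in> {1..n}"
  shows "omega_kappa a n (psi a n k) j = omega_tail a n k j"
proof -
  have "\<forall>i\<in>{1..n}. a i \<noteq> 0"
    using mem_Kset_imp_pos[OF k] by auto
  then have "omega_arg a n (psi a n k) j - omega_tail a n k j \<in> \<int>"
    using omega_arg_psi_minus_omega_tail_Ints j by simp
  moreover have "0 < omega_tail a n k j" "omega_tail a n k j < 1"
    using omega_tail_bounds[OF k] j by auto
  ultimately show ?thesis
    unfolding omega_kappa_eq_frac frac_unique_iff by simp
qed

lemma psi_in_Iprime: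
  assumes k: "k \<in> Kset a n" and n: "1 \<le> n"
  shows "psi a n k \<in> Iprime a n"
proof -
  have pos: "\<forall>i\<in>{1..n}. 0 < a i"
    using mem_Kset_imp_pos[OF k] .
  then have nz: "\<forall>i\<in>{1..n}. a i \<noteq> 0"
    by auto
  have d_n: "0 < dd a n"
    using dd_pos[OF pos] by simp
  have psi_eq: "real_of_int (psi a n k) = dd a n * omega_tail a n k 1"
    using omega_arg_1_psi[OF nz, of k] d_n by (simp add: omega_arg_def field_simps)
  have "0 < omega_tail a n k 1" "omega_tail a n k 1 < 1"
    using omega_tail_bounds[OF k] n by auto
  with d_n have "0 < real_of_int (psi a n k)" "real_of_int (psi a n k) < dd a n"
    unfolding psi_eq by simp_all
  then have range: "1 \<le> psi a n k" "psi a n k \<le> dd a n"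
    by simp_all
  have "\<not> a n dvd psi a n k"
  proof
    assume "a n dvd psi a n k"
    then obtain t where t: "psi a n k = a n * t" ..
    have "a n \<noteq> 0" "dd a (n - 1) \<noteq> 0"
      using nz n dd_nonzero[OF nz, of "n - 1"] by auto
    then have "omega_arg a n (psi a n k) n = real_of_int ((-1)^(n - 1) * t)"
      by (simp add: omega_arg_def t dd_eq_dd_pred_mult[OF n])
    then have "omega_kappa a n (psi a n k) n = 0"
      by (simp add: omega_kappa_eq_frac)
    moreover have "0 < omega_tail a n k n"
      using omega_tail_bounds[OF k] n by auto
    ultimately show False
      using omega_kappa_psi[OF k] n by simp
  qed
  with range show ?thesis
    by (simp add: Iprime_def)
qed

lemma inj_on_psi: "inj_on (psi a n) (Kset a n)"
proof (rule inj_onI)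
  fix k k' assume k: "k \<in> Kset a n" and k': "k' \<in> Kset a n" and eq: "psi a n k = psi a n k'"
  have nz: "\<forall>i\<in>{1..n}. a i \<noteq> 0"
    using mem_Kset_imp_pos[OF k] by auto
  have tail_eq: "omega_tail a n k j = omega_tail a n k' j" if "1 \<le> j" "j \<le> Suc n" for j
  proof (cases "j = Suc n")
    case False
    with that show ?thesis
      using omega_kappa_psi[OF k, of j] omega_kappa_psi[OF k', of j] eq by simp
  qed simp
  show "k = k'"
  proof
    fix i
    show "k i = k' i"
    proof (cases "i \<in> {1..n}")
      case True
      then have "real_of_int (k i + 1) = real_of_int (k' i + 1)"
        using omega_tail_rec[OF nz, of i k] omega_tail_rec[OF nz, of i k'] tail_eq[of i] tail_eq[of "Suc i"]
        by auto
      then show ?thesis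
        by simp
    next
      case False
      then show ?thesis
        using mem_KsetD(3)[OF k] mem_KsetD(3)[OF k'] by simp
    qed
  qed
qed

lemma card_Kset:
  assumes pos: "\<forall>i\<in>{1..n}. 0 < a i" and n: "1 \<le> n"
  shows "int (card (Kset a n)) = dd a n - dd a (n - 1)"
proof -
  define B where "B i = {0..a i - (if i = n then 2 else 1)}" for i
  have "bij_betw (\<lambda>k. restrict k {1..n}) (Kset a n) (PiE {1..n} B)"
  proof (rule bij_betw_byWitness[where f' = "\<lambda>h i. if i \<in> {1..n} then h i else 0"])
    show "\<forall>k\<in>Kset a n. (\<lambda>i. if i \<in> {1..n} then restrict k {1..n} i else 0) = k"
      by (auto simp: Kset_def)
    show "\<forall>h\<in>PiE {1..n} B. restrict (\<lambda>i. if i \<in> {1..n} then h i else 0) {1..n} = h"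
      by (auto simp: PiE_def extensional_def)
    show "(\<lambda>k. restrict k {1..n}) ` Kset a n \<subseteq> PiE {1..n} B"
      by (auto simp: Kset_def B_def)
    show "(\<lambda>h i. if i \<in> {1..n} then h i else 0) ` PiE {1..n} B \<subseteq> Kset a n"
      using n by (auto simp: Kset_def B_def PiE_def Pi_def)
  qed
  then have "int (card (Kset a n)) = (\<Prod>i\<in>{1..n}. int (card (B i)))"
    by (simp add: bij_betw_same_card card_PiE)
  also have "\<dots> = (\<Prod>i\<in>{1..n}. a i - (if i = n then 1 else 0))"
  proof (rule prod.cong)
    fix i assume "i \<in> {1..n}"
    with pos n have "0 < a i" "0 < a n"
      by auto
    then show "int (card (B i)) = a i - (if i = n then 1 else 0)"
      by (simp add: B_def)
  qed simp
  also have "\<dots> = (a n - 1) * dd a (n - 1)"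
    using n by (cases n) (simp_all add: prod.nat_ivl_Suc' dd_def)
  also have "\<dots> = dd a n - dd a (n - 1)"
    by (simp add: dd_eq_dd_pred_mult[OF n] algebra_simps)
  finally show ?thesis .
qed

lemma card_Iprime:
  assumes pos: "\<forall>i\<in>{1..n}. 0 < a i" and n: "1 \<le> n"
  shows "int (card (Iprime a n)) = dd a n - dd a (n - 1)"
proof -
  have a_n: "0 < a n"
    using pos n by auto
  have d_n: "dd a n = a n * dd a (n - 1)"
    using dd_eq_dd_pred_mult[OF n] by simp
  have d_pred: "0 < dd a (n - 1)"
    using dd_pos[OF pos] by simp
  define M where "M = (\<lambda>t. a n * t) ` {1..dd a (n - 1)}"
  have M_eq: "M = {x \<in> {1..dd a n}. a n dvd x}"
  proof (intro set_eqI iffI)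
    fix x assume "x \<in> M"
    then obtain t where "1 \<le> t" "t \<le> dd a (n - 1)" "x = a n * t"
      by (auto simp: M_def)
    with a_n show "x \<in> {x \<in> {1..dd a n}. a n dvd x}"
      by (auto simp: d_n intro: order_trans[of 1 t] mult_le_cancel_left_pos[THEN iffD2])
  next
    fix x assume "x \<in> {x \<in> {1..dd a n}. a n dvd x}"
    then obtain t where t: "0 < a n * t" "a n * t \<le> a n * dd a (n - 1)" "x = a n * t"
      by (auto simp: d_n)
    with a_n have "1 \<le> t" "t \<le> dd a (n - 1)"
      by (simp_all add: zero_less_mult_iff)
    with t show "x \<in> M"
      by (auto simp: M_def)
  qed
  have "Iprime a n = {1..dd a n} - M"
    by (auto simp: Iprime_def M_eq)
  moreover have "M \<subseteq> {1..dd a n}"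
    by (auto simp: M_eq)
  moreover have "card M = nat (dd a (n - 1))"
    unfolding M_def using a_n by (simp add: card_image inj_on_def)
  ultimately have "card (Iprime a n) = nat (dd a n) - nat (dd a (n - 1))"
    by (simp add: card_Diff_subset finite_subset)
  moreover have "dd a (n - 1) \<le> dd a n"
    using a_n d_pred by (simp add: d_n)
  ultimately show ?thesis
    using d_pred by (simp add: nat_diff_distrib[symmetric])
qed

theorem proposition2p15:
  fixes a :: "nat \<Rightarrow> int" and n :: nat
  assumes "n \<ge> 1"
    and "\<forall>i\<in>{1..n}. a i \<ge> 2"
  shows "bij_betw (psi a n) (Kset a n) (Iprime a n)
    \<and> int (card (Kset a n)) = dd a n - dd a (n - 1)
    \<and> int (card (Iprime a n)) = dd a n - dd a (n - 1)
    \<and> (\<forall>k\<in>Kset a n. \<forall>i\<in>{1..n}. omega_kappa a n (psi a n k) i = omega_vec a n k i)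
    \<and> psi a n (\<lambda>_. 0) = (\<Sum>l=1..n. (-1)^(l-1) * (dd a n div dd a l))"
proof -
  have pos: "\<forall>i\<in>{1..n}. 0 < a i"
    using assms(2) by force
  then have nz: "\<forall>i\<in>{1..n}. a i \<noteq> 0"
    by auto
  note card_K = card_Kset[OF pos assms(1)] and card_I = card_Iprime[OF pos assms(1)]
  have "psi a n ` Kset a n = Iprime a n"
  proof (rule card_subset_eq)
    show "finite (Iprime a n)"
      by (rule finite_subset[of _ "{1..dd a n}"]) (auto simp: Iprime_def)
    show "psi a n ` Kset a n \<subseteq> Iprime a n"
      using psi_in_Iprime assms(1) by blast
    show "card (psi a n ` Kset a n) = card (Iprime a n)"
      using card_image[OF inj_on_psi] card_K card_I by simp
  qed
  then have "bij_betw (psi a n) (Kset a n) (Iprime a n)"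
    using inj_on_psi by (simp add: bij_betw_def)
  moreover have "omega_kappa a n (psi a n k) i = omega_vec a n k i" if "k \<in> Kset a n" "i \<in> {1..n}" for k i
    using omega_kappa_psi[OF that] omega_vec_eq_omega_tail[OF nz that(2)] by simp
  ultimately show ?thesis
    using card_K card_I by (simp add: psi_def)
qed

end
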